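(* Let $\lambda=(\lambda_1,\ldots,\lambda_n)\in\mathbb{C}^n$ have pairwise distinct entries and let $\hat\lambda$ be any permutation (rearrangement) of the entries of $\lambda$. Then for all $t$, $[\nu_{0,\lambda}(t),\ldots,\nu_{n-1,\lambda}(t)]=[\nu_{0,\hat\lambda}(t),\ldots,\nu_{n-1,\hat\lambda}(t)]$.
   Context: For $\lambda\in\mathbb{C}^n$ with distinct entries, $V_\lambda$ is the $n\times n$ Vandermonde matrix with $(i,j)$ entry $\lambda_j^{i-1}$, and the Vandermonde basis functions are defined by $[\nu_{0,\lambda}(t),\ldots,\nu_{n-1,\lambda}(t)]=[e^{\lambda_1 t},\ldots,e^{\lambda_n t}]\,V_\lambda^{-1}$. *)

theory Defs
  imports "Jordan_Normal_Form.Matrix" "HOL-Library.Multiset" Complex_Main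
begin

text \<open>The vector lambda in C^n is represented as a list of length n;
  entry lambda_j (1-based) is lam ! (j-1).\<close>

definition vandermonde :: "complex list \<Rightarrow> complex mat" where
  "vandermonde lam = mat (length lam) (length lam) (\<lambda>(i, j). (lam ! j) ^ i)"

definition mat_inv :: "complex mat \<Rightarrow> complex mat" where
  "mat_inv A = (SOME B. B \<in> carrier_mat (dim_row A) (dim_row A) \<and>
                        A * B = 1\<^sub>m (dim_row A) \<and> B * A = 1\<^sub>m (dim_row A))"

definition exp_row :: "complex list \<Rightarrow> real \<Rightarrow> complex mat" where
  "exp_row lam t = mat 1 (length lam) (\<lambda>(_, j). exp ((lam ! j) * of_real t))"

definition vandermonde_basis :: "complex list \<Rightarrow> real \<Rightarrow> complex list" where
  "vandermonde_basis lam t =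
     (let M = exp_row lam t * mat_inv (vandermonde lam)
      in map (\<lambda>k. M $$ (0, k)) [0..<length lam])"

end

theory Submission
  imports Defs "HOL-Computational_Algebra.Polynomial" "HOL-Combinatorics.Permutations"
    "Jordan_Normal_Form.Determinant"
begin

text \<open>The row of Vandermonde basis functions is \<open>E V\<inverse>\<close> with \<open>E = exp_row lam t\<close> and
  \<open>V = vandermonde lam\<close>. Rearranging the entries of \<open>lam\<close> by a permutation multiplies both
  \<open>E\<close> and \<open>V\<close> from the right by the same permutation matrix \<open>P\<close>, and
  \<open>(E P) (V P)\<inverse> = E V\<inverse>\<close>. The matrix \<open>V\<close> is invertible for distinct nodes because
  a vector in the kernel of its transpose is the coefficient vector of a polynomial of degree
  below \<open>n\<close> vanishing at \<open>n\<close> distinct points.\<close>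

lemma vandermonde_carrier_mat [simp]:
  "vandermonde lam \<in> carrier_mat (length lam) (length lam)"
  by (simp add: vandermonde_def)

lemma transpose_vandermonde_mult_vec_eq_0:
  assumes "distinct lam" and v: "v \<in> carrier_vec (length lam)"
    and kernel: "transpose_mat (vandermonde lam) *\<^sub>v v = 0\<^sub>v (length lam)"
  shows "v = 0\<^sub>v (length lam)"
proof (rule eq_vecI)
  let ?n = "length lam"
  define p where "p = (\<Sum>i<?n. monom (v $ i) i)"
  fix i assume "i < dim_vec (0\<^sub>v ?n)"
  then have "i < ?n" by simp
  have "poly p (lam ! j) = 0" if "j < ?n" for j
  proof -
    have "(transpose_mat (vandermonde lam) *\<^sub>v v) $ j = 0"
      using kernel that by simp
    then show ?thesis
      using that v by (simp add: p_def poly_sum poly_monom vandermonde_def scalar_prod_def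
          lessThan_atLeast0 mult.commute)
  qed
  moreover have "degree p < card (set lam)"
    unfolding p_def distinct_card[OF \<open>distinct lam\<close>] using \<open>i < ?n\<close>
    by (intro degree_sum_less) (auto intro: le_less_trans[OF degree_monom_le])
  ultimately have "p = 0"
    by (intro poly_eqI_degree[of "set lam"]) (auto simp: in_set_conv_nth)
  then have "coeff p i = 0" by simp
  then show "v $ i = 0\<^sub>v ?n $ i"
    using \<open>i < ?n\<close> by (simp add: p_def coeff_sum coeff_monom)
qed (use v in simp)

lemma det_vandermonde_nonzero:
  assumes "distinct lam"
  shows "det (vandermonde lam) \<noteq> 0"
proof
  let ?n = "length lam"
  assume "det (vandermonde lam) = 0"
  then have "det (transpose_mat (vandermonde lam)) = 0"
    by (simp add: det_transpose[OF vandermonde_carrier_mat])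
  then obtain v where "v \<in> carrier_vec ?n" "v \<noteq> 0\<^sub>v ?n"
    "transpose_mat (vandermonde lam) *\<^sub>v v = 0\<^sub>v ?n"
    by (auto simp: det_0_iff_vec_prod_zero[of _ ?n])
  with transpose_vandermonde_mult_vec_eq_0[OF assms] show False by blast
qed

definition perm_mat :: "nat \<Rightarrow> (nat \<Rightarrow> nat) \<Rightarrow> 'a :: semiring_1 mat" where
  "perm_mat n p = mat n n (\<lambda>(i, j). if i = p j then 1 else 0)"

lemma perm_mat_carrier_mat [simp]: "perm_mat n p \<in> carrier_mat n n"
  and dim_perm_mat [simp]: "dim_row (perm_mat n p) = n" "dim_col (perm_mat n p) = n"
  by (simp_all add: perm_mat_def)

lemma mult_perm_mat:
  assumes "A \<in> carrier_mat m n" and p: "p permutes {..<n}"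
  shows "A * perm_mat n p = mat m n (\<lambda>(i, j). A $$ (i, p j))"
proof (rule eq_matI)
  fix i j assume "i < dim_row (mat m n (\<lambda>(i, j). A $$ (i, p j)))"
    and "j < dim_col (mat m n (\<lambda>(i, j). A $$ (i, p j)))"
  then have "i < m" "j < n" by auto
  moreover have "p j < n"
    using permutes_in_image[OF p] \<open>j < n\<close> by simp
  ultimately show "(A * perm_mat n p) $$ (i, j) = mat m n (\<lambda>(i, j). A $$ (i, p j)) $$ (i, j)"
    using assms(1) by (simp add: perm_mat_def scalar_prod_def if_distrib[of "\<lambda>x. _ * x"]
        sum.delta cong: if_cong)
qed (use assms in auto)

lemma det_perm_mat:
  assumes p: "p permutes {..<n}"
  shows "det (perm_mat n p :: 'a :: comm_ring_1 mat) = signof p"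
proof -
  have "perm_mat n p = mat n n (\<lambda>(i, j). (1\<^sub>m n :: 'a mat) $$ (Hilbert_Choice.inv p i, j))"
    using permutes_inverses[OF p] permutes_in_image[OF permutes_inv[OF p]]
    by (intro eq_matI) (auto simp: perm_mat_def)
  also have "det \<dots> = signof (Hilbert_Choice.inv p)"
    using det_permute_rows[of "1\<^sub>m n" n "Hilbert_Choice.inv p"] permutes_inv[OF p]
    by (simp add: lessThan_atLeast0)
  finally show ?thesis
    using signof_inv[OF _ p] by simp
qed

lemma det_perm_mat_nonzero:
  assumes "p permutes {..<n}"
  shows "det (perm_mat n p :: 'a :: comm_ring_1 mat) \<noteq> 0"
  using det_perm_mat[OF assms, where 'a = 'a] signof_pm_one[of p, where 'a = 'a] by auto

lemma vandermonde_permute_list: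
  assumes "p permutes {..<length lam}"
  shows "vandermonde (permute_list p lam) = vandermonde lam * perm_mat (length lam) p"
  unfolding mult_perm_mat[OF vandermonde_carrier_mat assms]
  by (auto simp: vandermonde_def permute_list_nth[OF assms] permutes_in_image[OF assms, simplified]
      intro!: eq_matI)

lemma exp_row_carrier_mat [simp]: "exp_row lam t \<in> carrier_mat 1 (length lam)"
  by (simp add: exp_row_def)

lemma exp_row_permute_list:
  assumes "p permutes {..<length lam}"
  shows "exp_row (permute_list p lam) t = exp_row lam t * perm_mat (length lam) p"
  unfolding mult_perm_mat[OF exp_row_carrier_mat assms]
  by (auto simp: exp_row_def permute_list_nth[OF assms] permutes_in_image[OF assms, simplified]
      intro!: eq_matI)

lemma mat_inv_inverse:
  assumes A: "A \<in> carrier_mat n n" and "det A \<noteq> 0"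
  shows "mat_inv A \<in> carrier_mat n n" "A * mat_inv A = 1\<^sub>m n" "mat_inv A * A = 1\<^sub>m n"
proof -
  let ?inverse = "\<lambda>B. B \<in> carrier_mat n n \<and> A * B = 1\<^sub>m n \<and> B * A = 1\<^sub>m n"
  have "A \<in> Units (ring_mat TYPE(complex) n undefined)"
    by (rule det_non_zero_imp_unit[OF assms])
  then have "\<exists>B. ?inverse B"
    by (auto simp: Units_def ring_mat_def)
  then have "?inverse (mat_inv A)"
    using someI_ex A unfolding mat_inv_def by simp
  then show "mat_inv A \<in> carrier_mat n n" "A * mat_inv A = 1\<^sub>m n" "mat_inv A * A = 1\<^sub>m n"
    by auto
qed

lemma mult_mat_inv_mult_right:
  assumes E: "E \<in> carrier_mat m n" and V: "V \<in> carrier_mat n n" and P: "P \<in> carrier_mat n n"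
    and "det V \<noteq> 0" "det P \<noteq> 0"
  shows "E * P * mat_inv (V * P) = E * mat_inv V"
proof -
  let ?W = "mat_inv (V * P)"
  have "det (V * P) \<noteq> 0"
    using assms by (simp add: det_mult[OF V P])
  then have W: "?W \<in> carrier_mat n n" "V * P * ?W = 1\<^sub>m n"
    using mat_inv_inverse[of "V * P" n] V P by auto
  have V': "mat_inv V \<in> carrier_mat n n" "mat_inv V * V = 1\<^sub>m n"
    using mat_inv_inverse[OF V \<open>det V \<noteq> 0\<close>] by auto
  have "E * P * ?W = E * (mat_inv V * V) * P * ?W"
    using E by (simp add: V')
  also have "\<dots> = E * mat_inv V * (V * P * ?W)"
    using E V P W(1) V'(1)
    by (simp add: assoc_mult_mat[of _ m n _ n _ n] assoc_mult_mat[of _ n n _ n _ n])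
  also have "\<dots> = E * mat_inv V"
    using E V' by (simp add: W)
  finally show ?thesis .
qed

theorem proposition3:
  fixes lam lam' :: "complex list" and t :: real
  assumes "distinct lam"
    and "mset lam' = mset lam"
  shows "vandermonde_basis lam t = vandermonde_basis lam' t"
proof -
  obtain p where p: "p permutes {..<length lam}" "permute_list p lam = lam'"
    using mset_eq_permutation[OF assms(2)] by blast
  let ?P = "perm_mat (length lam) p :: complex mat"
  have "exp_row lam' t * mat_inv (vandermonde lam')
      = exp_row lam t * ?P * mat_inv (vandermonde lam * ?P)"
    unfolding p(2)[symmetric] vandermonde_permute_list[OF p(1)] exp_row_permute_list[OF p(1)] ..
  also have "\<dots> = exp_row lam t * mat_inv (vandermonde lam)"
    by (rule mult_mat_inv_mult_right[OF exp_row_carrier_mat vandermonde_carrier_mat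
          perm_mat_carrier_mat det_vandermonde_nonzero[OF assms(1)] det_perm_mat_nonzero[OF p(1)]])
  finally show ?thesis
    using mset_eq_length[OF assms(2)] by (simp add: vandermonde_basis_def)
qed

end
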